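(* Let $d\geq 1$, $n\geq 1$ and $1\leq a\leq d+1$ be integers. Then $$\sum_{\pi\in \mathcal F_d^{(a)}(n)}\lambda(\pi)-\sum_{\pi\in \mathcal H_d^{(a)}(n)}\lambda(\pi)=\sum_{m=1}^{n-1} f_d^{(a)}(n-m)\,f_d^{(1)}(m)-\sum_{m=1}^{n-1} f_d^{(a)}(n-m)\,f_d^{(d+1)}(m).$$ Equivalently, $\sum_{n\geq1}\Big(\sum_{\pi\in \mathcal F_d^{(a)}(n)}\lambda(\pi)-\sum_{\pi\in \mathcal H_d^{(a)}(n)}\lambda(\pi)\Big)q^n=\dfrac{q^{a+1}-q^{a+1+d}}{(1-q-q^{d+1})^2}$.
   Context: A partition is a finite nonincreasing sequence of positive integers (its parts); its size is not fixed. For a partition $\pi$, $\lambda(\pi)$ is its number of parts, $\alpha(\pi)$ its largest part, and its perimeter is $\alpha(\pi)+\lambda(\pi)-1$. A partition has $d$-distinct parts if any two of its parts differ by at least $d$. For $1\le b\le d+1$, $\mathcal F_d^{(b)}(n)$ is the set of partitions of perimeter $n$ all of whose parts are $\equiv b \pmod{d+1}$, and $f_d^{(b)}(n)=|\mathcal F_d^{(b)}(n)|$. $\mathcal H_d^{(a)}(n)$ is the set of partitions of perimeter $n$ whose parts are $d$-distinct and all $\geq a$. (The paper writes the right-hand side as $fp^{(a,1)}(n)-fp^{(a,d+1)}(n)$ where $fp^{(a,b)}(n)$ counts ordered pairs $(\pi_1,\pi_2)$ with $\pi_1\in\mathcal F_d^{(a)}(n-m)$, $\pi_2\in\mathcal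 F_d^{(b)}(m)$ for some $1\le m\le n-1$.) *)

theory Defs
  imports Main
begin

definition is_partition :: "nat list \<Rightarrow> bool" where
  "is_partition xs \<longleftrightarrow> sorted_wrt (\<ge>) xs \<and> (\<forall>x\<in>set xs. 0 < x)"

definition num_parts :: "nat list \<Rightarrow> nat" where
  "num_parts xs = length xs"

definition largest_part :: "nat list \<Rightarrow> nat" where
  "largest_part xs = Max (insert 0 (set xs))"

definition perimeter :: "nat list \<Rightarrow> nat" where
  "perimeter xs = largest_part xs + num_parts xs - 1"

definition d_distinct :: "nat \<Rightarrow> nat list \<Rightarrow> bool" where
  "d_distinct d xs \<longleftrightarrow> (\<forall>i j. i < j \<and> j < length xs \<longrightarrow>
       (xs ! i \<ge> xs ! j + d \<or> xs ! j \<ge> xs ! i + d))"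

definition F_set :: "nat \<Rightarrow> nat \<Rightarrow> nat \<Rightarrow> nat list set" where
  "F_set d b n = {xs. is_partition xs \<and> perimeter xs = n \<and>
      (\<forall>x\<in>set xs. x mod (d + 1) = b mod (d + 1))}"

definition f_count :: "nat \<Rightarrow> nat \<Rightarrow> nat \<Rightarrow> nat" where
  "f_count d b n = card (F_set d b n)"

definition H_set :: "nat \<Rightarrow> nat \<Rightarrow> nat \<Rightarrow> nat list set" where
  "H_set d a n = {xs. is_partition xs \<and> perimeter xs = n \<and> d_distinct d xs \<and>
      (\<forall>x\<in>set xs. a \<le> x)}"

end

theory Submission
  imports Defs
begin

(* Both sides of the identity satisfy the recursion
     X(n) = X(n - 1) + X(n - d - 1) + f(n - 1) - f(n - d - 1),   X(0) = 0,
   where f = f_d^(a).  Reading a partition from its smallest part: a member of F has smallest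
   part a, which can be removed, or all parts at least a + d + 1, and then d + 1 can be taken
   off every part; a member of H has smallest part a, which can be removed while the other parts
   drop by d, or all parts above a, and then every part drops by one.  Hence F and H obey the same
   counting recursion f(n) = [n = a] + f(n - 1) + f(n - d - 1), and tracking the number of parts
   gives the recursion for the difference of the part counts.  On the right, convolving with f
   inherits the recursion of f, and the inhomogeneous term f_d^(1)(n - a) - f_d^(d+1)(n - a) equals
   f(n - 1) - f(n - d - 1) because f_d^(b)(k) only depends on k - b. *)

lemma perimeter_sorted:
  assumes "sorted_wrt (\<ge>) xs" "xs \<noteq> []"
  shows "perimeter xs = hd xs + length xs - 1"
proof -
  have "largest_part xs = hd xs"
    using assms unfolding largest_part_def by (cases xs) (auto intro!: Max_eqI)
  thus ?thesis by (simp add: perimeter_def num_parts_def)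
qed

lemma perimeter_Nil: "perimeter [] = 0"
  by (simp add: perimeter_def largest_part_def num_parts_def)

lemma congruent_part_iff:
  fixes x b d :: nat
  assumes "1 \<le> b" "b \<le> d + 1"
  shows "0 < x \<and> x mod (d + 1) = b mod (d + 1) \<longleftrightarrow> b \<le> x \<and> (d + 1) dvd (x - b)"
proof
  assume x: "0 < x \<and> x mod (d + 1) = b mod (d + 1)"
  have "b \<le> x"
  proof (rule ccontr)
    assume "\<not> b \<le> x"
    hence "x mod (d + 1) = x" using assms by simp
    moreover have "b mod (d + 1) = (if b = d + 1 then 0 else b)" using assms by auto
    ultimately show False using x \<open>\<not> b \<le> x\<close> by (auto split: if_splits)
  qed
  thus "b \<le> x \<and> (d + 1) dvd (x - b)" using x by (simp add: mod_eq_dvd_iff_nat)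
next
  assume "b \<le> x \<and> (d + 1) dvd (x - b)"
  thus "0 < x \<and> x mod (d + 1) = b mod (d + 1)" using assms by (simp add: mod_eq_dvd_iff_nat)
qed

lemma d_distinct_iff_sorted_wrt:
  assumes "1 \<le> d" "sorted_wrt (\<ge>) xs"
  shows "d_distinct d xs \<longleftrightarrow> sorted_wrt (\<lambda>x y. y + d \<le> x) xs"
proof -
  have "\<And>i j. i < j \<Longrightarrow> j < length xs \<Longrightarrow> xs ! j \<le> xs ! i"
    using assms(2) by (simp add: sorted_wrt_iff_nth_less)
  thus ?thesis unfolding d_distinct_def sorted_wrt_iff_nth_less
    using assms(1) by (metis add_le_same_cancel1 le_antisym le_trans not_one_le_zero)
qed

lemma sorted_wrt_gap_imp_sorted:
  "sorted_wrt (\<lambda>x y. y + (d::nat) \<le> x) xs \<Longrightarrow> sorted_wrt (\<ge>) xs"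
  by (erule sorted_wrt_mono_rel[rotated]) auto

definition F_alt :: "nat \<Rightarrow> nat \<Rightarrow> nat \<Rightarrow> nat list set" where
  "F_alt d b n = {xs. xs \<noteq> [] \<and> sorted_wrt (\<ge>) xs \<and> hd xs + length xs = Suc n \<and>
     (\<forall>x\<in>set xs. b \<le> x \<and> (d + 1) dvd (x - b))}"

definition H_alt :: "nat \<Rightarrow> nat \<Rightarrow> nat \<Rightarrow> nat list set" where
  "H_alt d a n = {xs. xs \<noteq> [] \<and> sorted_wrt (\<lambda>x y. y + d \<le> x) xs \<and> hd xs + length xs = Suc n \<and>
     (\<forall>x\<in>set xs. a \<le> x)}"

lemma F_set_eq_F_alt:
  assumes "1 \<le> n" "1 \<le> b" "b \<le> d + 1"
  shows "F_set d b n = F_alt d b n"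
proof (intro set_eqI)
  fix xs
  show "xs \<in> F_set d b n \<longleftrightarrow> xs \<in> F_alt d b n"
  proof (cases "xs = []")
    case True thus ?thesis using assms(1) by (simp add: F_set_def F_alt_def perimeter_Nil)
  next
    case False
    have "(\<forall>x\<in>set xs. 0 < x) \<and> (\<forall>x\<in>set xs. x mod (d + 1) = b mod (d + 1)) \<longleftrightarrow>
        (\<forall>x\<in>set xs. b \<le> x \<and> (d + 1) dvd (x - b))"
      using congruent_part_iff[OF assms(2,3)] by blast
    thus ?thesis using False assms(1)
      by (auto simp: F_set_def F_alt_def is_partition_def perimeter_sorted)
  qed
qed

lemma H_set_eq_H_alt:
  assumes "1 \<le> n" "1 \<le> a" "1 \<le> d"
  shows "H_set d a n = H_alt d a n"
proof (intro set_eqI)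
  fix xs
  show "xs \<in> H_set d a n \<longleftrightarrow> xs \<in> H_alt d a n"
  proof (cases "xs = []")
    case True thus ?thesis using assms(1) by (simp add: H_set_def H_alt_def perimeter_Nil)
  next
    case False
    have "(\<forall>x\<in>set xs. a \<le> x) \<Longrightarrow> (\<forall>x\<in>set xs. 0 < x)" using assms(2) by auto
    thus ?thesis using False assms(1,3) sorted_wrt_gap_imp_sorted[of d xs]
      by (auto simp: H_set_def H_alt_def is_partition_def perimeter_sorted d_distinct_iff_sorted_wrt)
  qed
qed

lemma map_diff_add_cancel:
  "\<forall>x\<in>set xs. c \<le> x \<Longrightarrow> map (\<lambda>x. x + c) (map (\<lambda>x. x - (c::nat)) xs) = xs"
  by (induction xs) auto

lemma F_alt_index_ge: "xs \<in> F_alt d b n \<Longrightarrow> b \<le> n"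
  by (cases xs) (auto simp: F_alt_def)

lemma Nil_notin_F_alt: "[] \<notin> F_alt d b n"
  by (simp add: F_alt_def)

lemma singleton_in_F_alt: "[b] \<in> F_alt d b b"
  by (simp add: F_alt_def)

lemma snoc_in_F_alt: "ys \<in> F_alt d b n \<Longrightarrow> ys @ [b] \<in> F_alt d b (Suc n)"
  by (auto simp: F_alt_def sorted_wrt_append)

lemma shift_in_F_alt:
  "rs \<in> F_alt d b n \<Longrightarrow> map (\<lambda>x. x + (d + 1)) rs \<in> F_alt d b (n + (d + 1))"
proof -
  assume "rs \<in> F_alt d b n"
  moreover have "(d + 1) dvd (x + (d + 1) - b)" if "b \<le> x" "(d + 1) dvd (x - b)" for x
    using that by (metis Nat.add_diff_assoc2 dvd_add_triv_right_iff)
  ultimately show ?thesis by (auto simp: F_alt_def sorted_wrt_map hd_map)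
qed

lemma unshift_in_F_alt:
  assumes xs: "xs \<in> F_alt d b n" and big: "\<forall>y\<in>set xs. b + (d + 1) \<le> y"
  shows "map (\<lambda>y. y - (d + 1)) xs \<in> F_alt d b (n - (d + 1))"
  unfolding F_alt_def
proof (intro CollectI conjI)
  have ne: "xs \<noteq> []" and sorted: "sorted_wrt (\<ge>) xs" and len: "hd xs + length xs = Suc n"
    and parts: "\<forall>y\<in>set xs. b \<le> y \<and> (d + 1) dvd (y - b)"
    using xs by (auto simp: F_alt_def)
  show "map (\<lambda>y. y - (d + 1)) xs \<noteq> []" using ne by simp
  show "sorted_wrt (\<ge>) (map (\<lambda>y. y - (d + 1)) xs)"
    using sorted by (auto simp: sorted_wrt_map elim!: sorted_wrt_mono_rel[rotated])
  have "hd xs \<ge> b + (d + 1)" "1 \<le> length xs"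
    using big ne hd_in_set[of xs] by (auto simp: Suc_le_eq)
  thus "hd (map (\<lambda>y. y - (d + 1)) xs) + length (map (\<lambda>y. y - (d + 1)) xs)
      = Suc (n - (d + 1))"
    using len ne by (simp add: hd_map)
  show "\<forall>z\<in>set (map (\<lambda>y. y - (d + 1)) xs). b \<le> z \<and> (d + 1) dvd (z - b)"
  proof
    fix z assume "z \<in> set (map (\<lambda>y. y - (d + 1)) xs)"
    then obtain y where y: "y \<in> set xs" "z = y - (d + 1)" by auto
    moreover have "(d + 1) dvd (y - b) - (d + 1)"
      using parts y(1) dvd_diff_nat dvd_refl by blast
    ultimately show "b \<le> z \<and> (d + 1) dvd (z - b)"
      using big by (force simp: add.commute)
  qed
qed

lemma F_alt_cases:
  assumes xs: "xs \<in> F_alt d b n"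
  obtains "xs = [b]" "n = b"
  | ys where "ys \<in> F_alt d b (n - 1)" "xs = ys @ [b]"
  | rs where "rs \<in> F_alt d b (n - (d + 1))" "xs = map (\<lambda>x. x + (d + 1)) rs"
proof -
  obtain ys x where xs_eq: "xs = ys @ [x]"
    using xs by (metis Nil_notin_F_alt rev_exhaust)
  have sorted: "sorted_wrt (\<ge>) xs" and len: "hd xs + length xs = Suc n"
    and parts: "\<forall>y\<in>set xs. b \<le> y \<and> (d + 1) dvd (y - b)"
    using xs by (auto simp: F_alt_def)
  have x_min: "\<forall>y\<in>set xs. x \<le> y"
    using sorted xs_eq by (auto simp: sorted_wrt_append)
  show thesis
  proof (cases "x = b")
    case True
    show thesis
    proof (cases "ys = []")
      case True
      thus thesis using that(1) xs_eq len \<open>x = b\<close> by simp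
    next
      case False
      hence "ys \<in> F_alt d b (n - 1)"
        using sorted parts len xs_eq by (auto simp: F_alt_def sorted_wrt_append)
      thus thesis using that(2) xs_eq \<open>x = b\<close> by simp
    qed
  next
    case False
    have "b + (d + 1) \<le> x"
    proof -
      have "b < x" using False parts xs_eq by auto
      moreover have "(d + 1) dvd (x - b)" using parts xs_eq by simp
      ultimately show ?thesis
        by (metis dvd_imp_le le_diff_conv2 less_imp_le zero_less_diff add.commute)
    qed
    hence big: "\<forall>y\<in>set xs. b + (d + 1) \<le> y" using x_min by force
    define rs where "rs = map (\<lambda>y. y - (d + 1)) xs"
    have "rs \<in> F_alt d b (n - (d + 1))"
      unfolding rs_def using xs big by (rule unshift_in_F_alt)
    moreover have "\<forall>y\<in>set xs. d + 1 \<le> y" using big by auto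
    hence "xs = map (\<lambda>x. x + (d + 1)) rs"
      unfolding rs_def by (rule map_diff_add_cancel[symmetric])
    ultimately show thesis using that(3) by blast
  qed
qed

lemma F_alt_eq:
  assumes "1 \<le> b" "1 \<le> n"
  shows "F_alt d b n = (if n = b then {[b]} else {}) \<union> (\<lambda>ys. ys @ [b]) ` F_alt d b (n - 1)
    \<union> map (\<lambda>x. x + (d + 1)) ` F_alt d b (n - (d + 1))"
proof (intro equalityI subsetI)
  fix xs assume "xs \<in> F_alt d b n"
  thus "xs \<in> (if n = b then {[b]} else {}) \<union> (\<lambda>ys. ys @ [b]) ` F_alt d b (n - 1)
      \<union> map (\<lambda>x. x + (d + 1)) ` F_alt d b (n - (d + 1))"
    by (cases rule: F_alt_cases) auto
next
  have "n - (d + 1) + (d + 1) = n" if "rs \<in> F_alt d b (n - (d + 1))" for rs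
    using F_alt_index_ge[OF that] assms(1) by linarith
  thus "xs \<in> F_alt d b n"
    if "xs \<in> (if n = b then {[b]} else {}) \<union> (\<lambda>ys. ys @ [b]) ` F_alt d b (n - 1)
      \<union> map (\<lambda>x. x + (d + 1)) ` F_alt d b (n - (d + 1))" for xs
    using that assms(2) singleton_in_F_alt snoc_in_F_alt[of _ d b "n - 1"]
      shift_in_F_alt[of _ d b "n - (d + 1)"]
    by (auto split: if_splits)
qed

lemma finite_sorted_lists_perimeter:
  "finite {xs. xs \<noteq> [] \<and> sorted_wrt (\<ge>) xs \<and> hd xs + length xs = Suc n}"
proof (rule finite_subset)
  show "finite {xs. set xs \<subseteq> {..n} \<and> length xs \<le> Suc n}"
    by (rule finite_lists_length_le) simp
  show "{xs. xs \<noteq> [] \<and> sorted_wrt (\<ge>) xs \<and> hd xs + length xs = Suc n}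
      \<subseteq> {xs. set xs \<subseteq> {..n} \<and> length xs \<le> Suc n}"
  proof
    fix xs assume "xs \<in> {xs. xs \<noteq> [] \<and> sorted_wrt (\<ge>) xs \<and> hd xs + length xs = Suc n}"
    then obtain y ys where "xs = y # ys" "sorted_wrt (\<ge>) xs" "y + length xs = Suc n"
      by (cases xs) auto
    thus "xs \<in> {xs. set xs \<subseteq> {..n} \<and> length xs \<le> Suc n}" by auto
  qed
qed

lemma finite_F_alt: "finite (F_alt d b n)"
  by (rule finite_subset[OF _ finite_sorted_lists_perimeter]) (auto simp: F_alt_def)

lemma sum_Un3_image:
  assumes "finite A" "finite B" "finite C" "inj_on f B" "inj_on g C"
    and "A \<inter> f ` B = {}" "A \<inter> g ` C = {}" "f ` B \<inter> g ` C = {}"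
  shows "sum h (A \<union> f ` B \<union> g ` C) = sum h A + sum (h \<circ> f) B + sum (h \<circ> g) C"
  using assms by (simp add: sum.union_disjoint Int_Un_distrib2 sum.reindex)

lemma sum_F_alt:
  assumes "1 \<le> b" "1 \<le> n"
  shows "sum h (F_alt d b n) = (if n = b then h [b] else 0)
    + (\<Sum>ys\<in>F_alt d b (n - 1). h (ys @ [b]))
    + (\<Sum>rs\<in>F_alt d b (n - (d + 1)). h (map (\<lambda>x. x + (d + 1)) rs))"
proof -
  have shifted: "b \<notin> set xs" if xs: "xs \<in> map (\<lambda>x. x + (d + 1)) ` F_alt d b k" for xs k
  proof -
    obtain rs where "rs \<in> F_alt d b k" "xs = map (\<lambda>x. x + (d + 1)) rs" using xs by blast
    thus ?thesis by (auto simp: F_alt_def)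
  qed
  have "sum h (F_alt d b n) = sum h (if n = b then {[b]} else {})
    + sum (h \<circ> (\<lambda>ys. ys @ [b])) (F_alt d b (n - 1))
    + sum (h \<circ> map (\<lambda>x. x + (d + 1))) (F_alt d b (n - (d + 1)))"
    unfolding F_alt_eq[OF assms]
  proof (intro sum_Un3_image finite_F_alt)
    show "inj_on (\<lambda>ys. ys @ [b]) (F_alt d b (n - 1))" by (rule inj_onI) simp
    show "inj_on (map (\<lambda>x. x + (d + 1))) (F_alt d b (n - (d + 1)))"
      by (rule inj_onI) (simp add: inj_map_eq_map inj_def)
    show "(if n = b then {[b]} else {}) \<inter> (\<lambda>ys. ys @ [b]) ` F_alt d b (n - 1) = {}"
      using Nil_notin_F_alt by (auto simp: image_iff)
    show "(if n = b then {[b]} else {})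
        \<inter> map (\<lambda>x. x + (d + 1)) ` F_alt d b (n - (d + 1)) = {}"
    proof -
      have "[b] \<notin> map (\<lambda>x. x + (d + 1)) ` F_alt d b k" for k
      proof
        assume "[b] \<in> map (\<lambda>x. x + (d + 1)) ` F_alt d b k"
        hence "b \<notin> set [b]" by (rule shifted)
        thus False by simp
      qed
      thus ?thesis by simp
    qed
    show "(\<lambda>ys. ys @ [b]) ` F_alt d b (n - 1)
        \<inter> map (\<lambda>x. x + (d + 1)) ` F_alt d b (n - (d + 1)) = {}"
    proof -
      have "b \<in> set (ys @ [b])" for ys by simp
      thus ?thesis using shifted by blast
    qed
  qed simp
  thus ?thesis by simp
qed

lemma H_alt_index_ge: "xs \<in> H_alt d a n \<Longrightarrow> a \<le> n"
  by (cases xs) (auto simp: H_alt_def)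

lemma Nil_notin_H_alt: "[] \<notin> H_alt d a n"
  by (simp add: H_alt_def)

lemma singleton_in_H_alt: "[a] \<in> H_alt d a a"
  by (simp add: H_alt_def)

lemma H_alt_mono: "a' \<le> a \<Longrightarrow> H_alt d a n \<subseteq> H_alt d a' n"
  by (auto simp: H_alt_def)

lemma shift_in_H_alt: "rs \<in> H_alt d a n \<Longrightarrow> map (\<lambda>x. x + c) rs \<in> H_alt d (a + c) (n + c)"
  by (auto simp: H_alt_def sorted_wrt_map hd_map)

lemma unshift_in_H_alt:
  assumes xs: "xs \<in> H_alt d (a + c) n"
  shows "map (\<lambda>x. x - c) xs \<in> H_alt d a (n - c)"
proof -
  have ne: "xs \<noteq> []" and len: "hd xs + length xs = Suc n"
    and parts: "\<forall>x\<in>set xs. a + c \<le> x" and sorted: "sorted_wrt (\<lambda>x y. y + d \<le> x) xs"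
    using xs by (auto simp: H_alt_def)
  have "hd xs \<ge> c" using parts hd_in_set[OF ne] by force
  moreover have "1 \<le> length xs" using ne by (simp add: Suc_le_eq)
  ultimately
  have "hd (map (\<lambda>x. x - c) xs) + length (map (\<lambda>x. x - c) xs) = Suc (n - c)"
    using len ne by (simp add: hd_map)
  moreover have "sorted_wrt (\<lambda>x y. y + d \<le> x) (map (\<lambda>x. x - c) xs)"
    using sorted unfolding sorted_wrt_map
    by (rule sorted_wrt_mono_rel[rotated]) (use parts in force)
  ultimately show ?thesis using ne parts by (force simp: H_alt_def)
qed

lemma snoc_in_H_alt: "ys \<in> H_alt d (a + d) n \<Longrightarrow> ys @ [a] \<in> H_alt d a (Suc n)"
  by (auto simp: H_alt_def sorted_wrt_append)

lemma H_alt_cases: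
  assumes xs: "xs \<in> H_alt d a n"
  obtains "xs = [a]" "n = a"
  | ys where "ys \<in> H_alt d a (n - 1)" "xs = map Suc ys"
  | rs where "rs \<in> H_alt d a (n - (d + 1))" "xs = map (\<lambda>x. x + d) rs @ [a]"
proof -
  obtain ys x where xs_eq: "xs = ys @ [x]"
    using xs by (metis Nil_notin_H_alt rev_exhaust)
  have sorted: "sorted_wrt (\<lambda>x y. y + d \<le> x) xs" and len: "hd xs + length xs = Suc n"
    and parts: "\<forall>y\<in>set xs. a \<le> y"
    using xs by (auto simp: H_alt_def)
  have x_min: "\<forall>y\<in>set ys. x + d \<le> y"
    using sorted xs_eq by (auto simp: sorted_wrt_append)
  show thesis
  proof (cases "x = a")
    case True
    show thesis
    proof (cases "ys = []")
      case True
      thus thesis using that(1) xs_eq len \<open>x = a\<close> by simp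
    next
      case False
      hence "ys \<in> H_alt d (a + d) (n - 1)"
        using sorted len xs_eq x_min \<open>x = a\<close> by (auto simp: H_alt_def sorted_wrt_append)
      hence "map (\<lambda>x. x - d) ys \<in> H_alt d a (n - (d + 1))"
        using unshift_in_H_alt by fastforce
      moreover have "\<forall>y\<in>set ys. d \<le> y" using x_min by auto
      hence "ys = map (\<lambda>x. x + d) (map (\<lambda>x. x - d) ys)"
        by (rule map_diff_add_cancel[symmetric])
      ultimately show thesis using that(3) xs_eq \<open>x = a\<close> by blast
    qed
  next
    case False
    hence big: "\<forall>y\<in>set xs. a + 1 \<le> y" using parts x_min xs_eq by fastforce
    hence "xs \<in> H_alt d (a + 1) n" using xs by (auto simp: H_alt_def)
    hence "map (\<lambda>x. x - 1) xs \<in> H_alt d a (n - 1)" by (rule unshift_in_H_alt)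
    moreover have "xs = map Suc (map (\<lambda>x. x - 1) xs)"
      using big by (induction xs) auto
    ultimately show thesis using that(2) by blast
  qed
qed

lemma H_alt_eq:
  assumes "1 \<le> a" "1 \<le> n"
  shows "H_alt d a n = (if n = a then {[a]} else {}) \<union> map Suc ` H_alt d a (n - 1)
    \<union> (\<lambda>rs. map (\<lambda>x. x + d) rs @ [a]) ` H_alt d a (n - (d + 1))"
proof (intro equalityI subsetI)
  fix xs assume "xs \<in> H_alt d a n"
  thus "xs \<in> (if n = a then {[a]} else {}) \<union> map Suc ` H_alt d a (n - 1)
      \<union> (\<lambda>rs. map (\<lambda>x. x + d) rs @ [a]) ` H_alt d a (n - (d + 1))"
    by (cases rule: H_alt_cases) auto
next
  have "map Suc ys \<in> H_alt d a n" if "ys \<in> H_alt d a (n - 1)" for ys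
    using shift_in_H_alt[OF that, of 1] H_alt_mono[of a "a + 1"] assms(2) by auto
  moreover have "map (\<lambda>x. x + d) rs @ [a] \<in> H_alt d a n"
    if "rs \<in> H_alt d a (n - (d + 1))" for rs
  proof -
    have "n - (d + 1) + d + 1 = n" using H_alt_index_ge[OF that] assms(1) by linarith
    thus ?thesis using snoc_in_H_alt[OF shift_in_H_alt[OF that, of d]] by simp
  qed
  ultimately show "xs \<in> H_alt d a n"
    if "xs \<in> (if n = a then {[a]} else {}) \<union> map Suc ` H_alt d a (n - 1)
      \<union> (\<lambda>rs. map (\<lambda>x. x + d) rs @ [a]) ` H_alt d a (n - (d + 1))" for xs
    using that singleton_in_H_alt by (auto split: if_splits)
qed

lemma finite_H_alt: "finite (H_alt d a n)"
  by (rule finite_subset[OF _ finite_sorted_lists_perimeter])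
    (auto simp: H_alt_def sorted_wrt_gap_imp_sorted)

lemma sum_H_alt:
  assumes "1 \<le> a" "1 \<le> n"
  shows "sum h (H_alt d a n) = (if n = a then h [a] else 0)
    + (\<Sum>ys\<in>H_alt d a (n - 1). h (map Suc ys))
    + (\<Sum>rs\<in>H_alt d a (n - (d + 1)). h (map (\<lambda>x. x + d) rs @ [a]))"
proof -
  have raised: "a \<notin> set xs" if xs: "xs \<in> map Suc ` H_alt d a k" for xs k
  proof -
    obtain ys where "ys \<in> H_alt d a k" "xs = map Suc ys" using xs by blast
    thus ?thesis by (auto simp: H_alt_def)
  qed
  have "sum h (H_alt d a n) = sum h (if n = a then {[a]} else {})
    + sum (h \<circ> map Suc) (H_alt d a (n - 1))
    + sum (h \<circ> (\<lambda>rs. map (\<lambda>x. x + d) rs @ [a])) (H_alt d a (n - (d + 1)))"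
    unfolding H_alt_eq[OF assms]
  proof (intro sum_Un3_image finite_H_alt)
    show "inj_on (map Suc) (H_alt d a (n - 1))"
      by (rule inj_onI) (simp add: inj_map_eq_map)
    show "inj_on (\<lambda>rs. map (\<lambda>x. x + d) rs @ [a]) (H_alt d a (n - (d + 1)))"
      by (rule inj_onI) (simp add: inj_map_eq_map inj_def)
    show "(if n = a then {[a]} else {}) \<inter> map Suc ` H_alt d a (n - 1) = {}"
    proof -
      have "[a] \<notin> map Suc ` H_alt d a k" for k
      proof
        assume "[a] \<in> map Suc ` H_alt d a k"
        hence "a \<notin> set [a]" by (rule raised)
        thus False by simp
      qed
      thus ?thesis by simp
    qed
    show "(if n = a then {[a]} else {})
        \<inter> (\<lambda>rs. map (\<lambda>x. x + d) rs @ [a]) ` H_alt d a (n - (d + 1)) = {}"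
      using Nil_notin_H_alt by (auto simp: image_iff)
    show "map Suc ` H_alt d a (n - 1)
        \<inter> (\<lambda>rs. map (\<lambda>x. x + d) rs @ [a]) ` H_alt d a (n - (d + 1)) = {}"
    proof -
      have "a \<in> set xs"
        if "xs \<in> (\<lambda>rs. map (\<lambda>x. x + d) rs @ [a]) ` H_alt d a (n - (d + 1))" for xs
        using that by auto
      thus ?thesis using raised[of _ "n - 1"] by (meson disjoint_iff)
    qed
  qed simp
  thus ?thesis by simp
qed

fun f_rec :: "nat \<Rightarrow> nat \<Rightarrow> nat \<Rightarrow> nat" where
  "f_rec d b 0 = 0"
| "f_rec d b (Suc k) = (if Suc k = b then 1 else 0) + f_rec d b k + f_rec d b (Suc k - (d + 1))"

lemma f_rec_eq:
  assumes "1 \<le> b"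
  shows "f_rec d b k = (if k = b then 1 else 0) + f_rec d b (k - 1) + f_rec d b (k - (d + 1))"
  using assms by (cases k) auto

lemma f_rec_below: "k < b \<Longrightarrow> f_rec d b k = 0"
  by (induction d b k rule: f_rec.induct) auto

lemma f_rec_shift:
  assumes "1 \<le> b"
  shows "f_rec d (b + c) (k + c) = f_rec d b k"
proof (induction k rule: less_induct)
  case (less k)
  show ?case
  proof (cases k)
    case 0
    thus ?thesis using assms by (simp add: f_rec_below)
  next
    case (Suc j)
    have "f_rec d (b + c) (Suc j + c - (d + 1)) = f_rec d b (Suc j - (d + 1))"
    proof (cases "d + 1 \<le> Suc j")
      case True
      hence "Suc j + c - (d + 1) = (Suc j - (d + 1)) + c" by simp
      thus ?thesis using less Suc by simp
    next
      case False
      thus ?thesis using assms by (simp add: f_rec_below)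
    qed
    moreover have "f_rec d (b + c) (j + c) = f_rec d b j" using less Suc by simp
    moreover have "f_rec d (b + c) (Suc j + c) = (if Suc j = b then 1 else 0)
        + f_rec d (b + c) (j + c) + f_rec d (b + c) (Suc j + c - (d + 1))"
      using f_rec.simps(2)[of d "b + c" "j + c"] by simp
    ultimately show ?thesis using Suc by (simp only: f_rec.simps(2))
  qed
qed

lemma card_F_alt:
  assumes "1 \<le> b"
  shows "card (F_alt d b n) = f_rec d b n"
proof (induction n rule: less_induct)
  case (less n)
  show ?case
  proof (cases "n = 0")
    case True
    hence "F_alt d b n = {}" using F_alt_index_ge assms by fastforce
    thus ?thesis using True by simp
  next
    case False
    have "card (F_alt d b n) = (if n = b then 1 else 0) + card (F_alt d b (n - 1))
        + card (F_alt d b (n - (d + 1)))"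
      unfolding card_eq_sum using assms False by (intro sum_F_alt) simp_all
    thus ?thesis using less False f_rec_eq[OF assms, of d n] by simp
  qed
qed

lemma card_H_alt:
  assumes "1 \<le> a"
  shows "card (H_alt d a n) = f_rec d a n"
proof (induction n rule: less_induct)
  case (less n)
  show ?case
  proof (cases "n = 0")
    case True
    hence "H_alt d a n = {}" using H_alt_index_ge assms by fastforce
    thus ?thesis using True by simp
  next
    case False
    have "card (H_alt d a n) = (if n = a then 1 else 0) + card (H_alt d a (n - 1))
        + card (H_alt d a (n - (d + 1)))"
      unfolding card_eq_sum using assms False by (intro sum_H_alt) simp_all
    thus ?thesis using less False f_rec_eq[OF assms, of d n] by simp
  qed
qed

definition length_excess :: "nat \<Rightarrow> nat \<Rightarrow> nat \<Rightarrow> int" where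
  "length_excess d a n
    = (\<Sum>xs\<in>F_alt d a n. int (length xs)) - (\<Sum>xs\<in>H_alt d a n. int (length xs))"

lemma length_excess_rec:
  assumes "1 \<le> a" "1 \<le> n"
  shows "length_excess d a n = length_excess d a (n - 1) + length_excess d a (n - (d + 1))
    + int (f_rec d a (n - 1)) - int (f_rec d a (n - (d + 1)))"
proof -
  have "(\<Sum>xs\<in>F_alt d a n. int (length xs)) = (if n = a then 1 else 0)
      + (\<Sum>xs\<in>F_alt d a (n - 1). int (length xs)) + int (f_rec d a (n - 1))
      + (\<Sum>xs\<in>F_alt d a (n - (d + 1)). int (length xs))"
    using sum_F_alt[OF assms, of "\<lambda>xs. int (length xs)"]
    by (simp add: sum.distrib card_F_alt[OF assms(1)])
  moreover have "(\<Sum>xs\<in>H_alt d a n. int (length xs)) = (if n = a then 1 else 0)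
      + (\<Sum>xs\<in>H_alt d a (n - 1). int (length xs)) + int (f_rec d a (n - (d + 1)))
      + (\<Sum>xs\<in>H_alt d a (n - (d + 1)). int (length xs))"
    using sum_H_alt[OF assms, of "\<lambda>xs. int (length xs)"]
    by (simp add: sum.distrib card_H_alt[OF assms(1)])
  ultimately show ?thesis by (simp add: length_excess_def)
qed

definition f_conv :: "nat \<Rightarrow> nat \<Rightarrow> (nat \<Rightarrow> int) \<Rightarrow> nat \<Rightarrow> int" where
  "f_conv d a h n = (\<Sum>m\<le>n. int (f_rec d a (n - m)) * h m)"

lemma f_conv_extend:
  assumes "k \<le> N"
  shows "(\<Sum>m\<le>N. int (f_rec d a (k - m)) * h m) = f_conv d a h k"
  unfolding f_conv_def using assms by (intro sum.mono_neutral_right) auto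

lemma f_conv_rec:
  assumes "1 \<le> a"
  shows "f_conv d a h n
    = (if a \<le> n then h (n - a) else 0) + f_conv d a h (n - 1) + f_conv d a h (n - (d + 1))"
proof -
  have "f_conv d a h n = (\<Sum>m\<le>n. (if m = n - a \<and> a \<le> n then h m else 0))
      + (\<Sum>m\<le>n. int (f_rec d a (n - 1 - m)) * h m)
      + (\<Sum>m\<le>n. int (f_rec d a (n - (d + 1) - m)) * h m)"
  proof -
    have "int (f_rec d a (n - m)) * h m = (if m = n - a \<and> a \<le> n then h m else 0)
        + int (f_rec d a (n - 1 - m)) * h m + int (f_rec d a (n - (d + 1) - m)) * h m"
      if "m \<le> n" for m
      using that assms f_rec_eq[OF assms, of d "n - m"]
      by (auto simp: algebra_simps diff_commute[of n m])
    thus ?thesis unfolding f_conv_def sum.distrib[symmetric] by (rule sum.cong[OF refl]) simp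
  qed
  also have "(\<Sum>m\<le>n. (if m = n - a \<and> a \<le> n then h m else 0)) = (if a \<le> n then h (n - a) else 0)"
    by (simp add: sum.delta)
  also have "(\<Sum>m\<le>n. int (f_rec d a (n - 1 - m)) * h m) = f_conv d a h (n - 1)"
    by (rule f_conv_extend) simp
  also have "(\<Sum>m\<le>n. int (f_rec d a (n - (d + 1) - m)) * h m) = f_conv d a h (n - (d + 1))"
    by (rule f_conv_extend) simp
  finally show ?thesis .
qed

definition f_diff :: "nat \<Rightarrow> nat \<Rightarrow> int" where
  "f_diff d m = int (f_rec d 1 m) - int (f_rec d (d + 1) m)"

lemma f_diff_shift:
  assumes "1 \<le> a"
  shows "(if a \<le> n then f_diff d (n - a) else 0)
    = int (f_rec d a (n - 1)) - int (f_rec d a (n - (d + 1)))"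
proof (cases "a \<le> n")
  case True
  have "f_rec d 1 (n - a) = f_rec d a (n - 1)"
    using f_rec_shift[of 1 d "a - 1" "n - a"] assms True by simp
  moreover have "f_rec d (d + 1) (n - a) = f_rec d a (n - (d + 1))"
  proof (cases "d + 1 \<le> n")
    case True
    thus ?thesis
      using f_rec_shift[of "d + 1" d a "n - a"] f_rec_shift[of a d "d + 1" "n - (d + 1)"] assms
        \<open>a \<le> n\<close>
      by (simp add: add.commute)
  next
    case False
    thus ?thesis using f_rec_below[of "n - a" "d + 1" d] by simp
  qed
  ultimately show ?thesis using True by (simp add: f_diff_def)
next
  case False
  thus ?thesis using f_rec_below[of "n - 1" a d] f_rec_below[of "n - (d + 1)" a d] by simp
qed

lemma length_excess_eq_f_conv:
  assumes "1 \<le> a"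
  shows "length_excess d a n = f_conv d a (f_diff d) n"
proof (induction n rule: less_induct)
  case (less n)
  show ?case
  proof (cases "n = 0")
    case True
    hence "F_alt d a n = {}" "H_alt d a n = {}"
      using F_alt_index_ge H_alt_index_ge assms by fastforce+
    thus ?thesis using True by (simp add: length_excess_def f_conv_def)
  next
    case False
    have "length_excess d a (n - 1) = f_conv d a (f_diff d) (n - 1)"
      "length_excess d a (n - (d + 1)) = f_conv d a (f_diff d) (n - (d + 1))"
      using less False by simp_all
    thus ?thesis
      using length_excess_rec[OF assms, of n d] f_conv_rec[OF assms, of d "f_diff d" n]
        f_diff_shift[OF assms, of n d] False
      by linarith
  qed
qed

lemma f_conv_eq_sum:
  assumes "h 0 = 0"
  shows "f_conv d a h n = (\<Sum>m=1..n-1. int (f_rec d a (n - m)) * h m)"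
  unfolding f_conv_def
proof (rule sum.mono_neutral_right)
  show "\<forall>m\<in>{..n} - {1..n - 1}. int (f_rec d a (n - m)) * h m = 0"
  proof
    fix m assume "m \<in> {..n} - {1..n - 1}"
    hence "m = 0 \<or> n - m = 0" by auto
    thus "int (f_rec d a (n - m)) * h m = 0" using assms by auto
  qed
qed auto

lemma f_count_eq_f_rec:
  "1 \<le> k \<Longrightarrow> 1 \<le> b \<Longrightarrow> b \<le> d + 1 \<Longrightarrow> f_count d b k = f_rec d b k"
  by (simp add: f_count_def F_set_eq_F_alt card_F_alt)

theorem theorem1p2:
  fixes d n a :: nat
  assumes "1 \<le> d" and "1 \<le> n" and "1 \<le> a" and "a \<le> d + 1"
  shows "(\<Sum>\<pi>\<in>F_set d a n. int (num_parts \<pi>)) - (\<Sum>\<pi>\<in>H_set d a n. int (num_parts \<pi>))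
       = (\<Sum>m=1..n-1. int (f_count d a (n - m)) * int (f_count d 1 m))
         - (\<Sum>m=1..n-1. int (f_count d a (n - m)) * int (f_count d (d + 1) m))"
proof -
  have "(\<Sum>\<pi>\<in>F_set d a n. int (num_parts \<pi>)) - (\<Sum>\<pi>\<in>H_set d a n. int (num_parts \<pi>))
      = length_excess d a n"
    using assms by (simp add: F_set_eq_F_alt H_set_eq_H_alt num_parts_def length_excess_def)
  also have "\<dots> = f_conv d a (f_diff d) n"
    using assms(3) by (rule length_excess_eq_f_conv)
  also have "\<dots> = (\<Sum>m=1..n-1. int (f_rec d a (n - m)) * f_diff d m)"
    by (rule f_conv_eq_sum) (simp add: f_diff_def)
  also have "\<dots> = (\<Sum>m=1..n-1. int (f_count d a (n - m)) * int (f_count d 1 m)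
      - int (f_count d a (n - m)) * int (f_count d (d + 1) m))"
    using assms by (intro sum.cong) (auto simp: f_count_eq_f_rec f_diff_def right_diff_distrib)
  finally show ?thesis by (simp only: sum_subtractf)
qed

end
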